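(* Let $K\ge 1$, $T\ge 1$ and let $\ell_1,\dots,\ell_T\in[0,1]^K$ be arbitrary loss vectors. Then the regret of AdaHedge satisfies \[ \mathcal{R}^{\mathrm{ah}}_T\le 2\sqrt{\frac{L_T^*(T-L_T^* )}{T}\ln K}+\tfrac{16}{3}\ln K+2. \]
   Context: Hedge setting: there are $K$ experts; in round $t$ the learner chooses a probability vector $w_t=(w_{t,1},\dots,w_{t,K})$, then the loss vector $\ell_t=(\ell_{t,1},\dots,\ell_{t,K})$ is revealed and the learner suffers the Hedge loss $h_t=\sum_k w_{t,k}\ell_{t,k}$. Write $L_{t,k}=\sum_{s=1}^t \ell_{s,k}$ (with $L_{0,k}=0$), $L^*_t=\min_k L_{t,k}$, $H_T=\sum_{t=1}^T h_t$, and regret $\mathcal{R}_T=H_T-L^*_T$. Exponential weights with learning rate $\eta\in(0,\infty]$ at time $t$: $w_{t,k}=e^{-\eta L_{t-1,k}}/\sum_j e^{-\eta L_{t-1,j}}$ if $\eta<\infty$; if $\eta=\infty$, $w_t$ is uniform on $\{k: L_{t-1,k}=L^*_{t-1}\}$. If round $t$ uses learning rate $\eta_t$, the mix loss is $m_t=-\frac{1}{\eta_t}\ln\big(\sum_k w_{t,k}e^{-\eta_t\ell_{t,k}}\big)$ if $\eta_t<\infty$ and $m_t=L^*_t-L^*_{t-1}$ if $\eta_t=\infty$; the mixability gap is $\delta_t=h_t-m_t$, with $\Delta_t=\sum_{s\le t}\delta_s$. AdaHedge: $\Delta_0=0$ and, for $t=1,2,\dots$, the learning rate is $\eta^{\mathrm{ah}}_t=\ln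 K/\Delta^{\mathrm{ah}}_{t-1}$ (interpreted as $+\infty$ when $\Delta^{\mathrm{ah}}_{t-1}=0$), the weights $w^{\mathrm{ah}}_t$ are the exponential weights with learning rate $\eta^{\mathrm{ah}}_t$ computed from $L_{t-1}$, and $\Delta^{\mathrm{ah}}_t=\Delta^{\mathrm{ah}}_{t-1}+\delta^{\mathrm{ah}}_t$. $\mathcal{R}^{\mathrm{ah}}_T$ denotes the regret of AdaHedge. *)

theory Defs
  imports "HOL-Analysis.Analysis" "HOL-Library.Extended_Real"
begin

text \<open>Experts are indexed by k < K, rounds by t = 1, 2, ...; the loss of expert k
in round t is lossv t k.\<close>

definition cumL :: "(nat \<Rightarrow> nat \<Rightarrow> real) \<Rightarrow> nat \<Rightarrow> nat \<Rightarrow> real" where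
  "cumL lossv t k = (\<Sum>s=1..t. lossv s k)"

definition Lstar :: "(nat \<Rightarrow> nat \<Rightarrow> real) \<Rightarrow> nat \<Rightarrow> nat \<Rightarrow> real" where
  "Lstar lossv K t = Min ((\<lambda>k. cumL lossv t k) ` {..<K})"

definition exp_weights :: "(nat \<Rightarrow> nat \<Rightarrow> real) \<Rightarrow> nat \<Rightarrow> ereal \<Rightarrow> nat \<Rightarrow> nat \<Rightarrow> real" where
  "exp_weights lossv K eta t k =
     (if eta = \<infinity> then
        (let S = {j \<in> {..<K}. cumL lossv (t - 1) j = Lstar lossv K (t - 1)} in
           if k \<in> S then 1 / real (card S) else 0)
      else exp (- real_of_ereal eta * cumL lossv (t - 1) k) /
           (\<Sum>j<K. exp (- real_of_ereal eta * cumL lossv (t - 1) j)))"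

definition hedge_loss :: "(nat \<Rightarrow> nat \<Rightarrow> real) \<Rightarrow> nat \<Rightarrow> ereal \<Rightarrow> nat \<Rightarrow> real" where
  "hedge_loss lossv K eta t = (\<Sum>k<K. exp_weights lossv K eta t k * lossv t k)"

definition mix_loss :: "(nat \<Rightarrow> nat \<Rightarrow> real) \<Rightarrow> nat \<Rightarrow> ereal \<Rightarrow> nat \<Rightarrow> real" where
  "mix_loss lossv K eta t =
     (if eta = \<infinity> then Lstar lossv K t - Lstar lossv K (t - 1)
      else - (1 / real_of_ereal eta) *
             ln (\<Sum>k<K. exp_weights lossv K eta t k * exp (- real_of_ereal eta * lossv t k)))"

definition mix_gap :: "(nat \<Rightarrow> nat \<Rightarrow> real) \<Rightarrow> nat \<Rightarrow> ereal \<Rightarrow> nat \<Rightarrow> real" where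
  "mix_gap lossv K eta t = hedge_loss lossv K eta t - mix_loss lossv K eta t"

definition ah_rate :: "nat \<Rightarrow> real \<Rightarrow> ereal" where
  "ah_rate K D = (if D = 0 then \<infinity> else ereal (ln (real K) / D))"

fun ah_Delta :: "(nat \<Rightarrow> nat \<Rightarrow> real) \<Rightarrow> nat \<Rightarrow> nat \<Rightarrow> real" where
  "ah_Delta lossv K 0 = 0"
| "ah_Delta lossv K (Suc t) =
     ah_Delta lossv K t + mix_gap lossv K (ah_rate K (ah_Delta lossv K t)) (Suc t)"

definition ah_eta :: "(nat \<Rightarrow> nat \<Rightarrow> real) \<Rightarrow> nat \<Rightarrow> nat \<Rightarrow> ereal" where
  "ah_eta lossv K t = ah_rate K (ah_Delta lossv K (t - 1))"

definition ah_regret :: "(nat \<Rightarrow> nat \<Rightarrow> real) \<Rightarrow> nat \<Rightarrow> nat \<Rightarrow> real" where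
  "ah_regret lossv K T =
     (\<Sum>t=1..T. hedge_loss lossv K (ah_eta lossv K t) t) - Lstar lossv K T"

end

theory Submission
  imports Defs
begin

text \<open>With the potential Phi_eta(t) = (ln K - ln (\<Sum>k. exp (- eta L_t,k))) / eta, the mix
  loss of round t is Phi_eta(t) - Phi_eta(t-1), and Phi_eta(t) decreases in eta. The learning
  rates of AdaHedge decrease, so its mix losses telescope to at most Phi at the last rate, which is
  at most L*_T + ln K / eta_T = L*_T + Delta_T. As the Hedge loss is mix loss plus mixability gap,
  the regret is at most 2 Delta_T.
  A Bernstein-type bound 2 delta_t / eta_t \<le> v_t + 2/3 delta_t, where v_t is the variance of the
  losses under w_t, together with delta_t \<le> 1 gives
  Delta_T^2 \<le> ln K \<Sum>t. v_t + (2/3 ln K + 1) Delta_T. For losses in [0,1],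
  v_t \<le> h_t (1 - h_t), and \<Sum>t. h_t (1 - h_t) \<le> H_T (T - H_T) / T by Cauchy-Schwarz.
  Substituting H_T = L*_T + regret and solving the quadratic inequality in Delta_T gives the
  bound.\<close>

lemma two_mult_three_power_le_fact: "(2::real) * 3 ^ n \<le> fact (n + 2)"
proof (induction n)
  case (Suc n)
  have "(2::real) * 3 ^ Suc n = 3 * (2 * 3 ^ n)" by simp
  also have "\<dots> \<le> 3 * fact (n + 2)" using Suc.IH by linarith
  also have "\<dots> \<le> (real n + 3) * fact (n + 2)" by (intro mult_right_mono) auto
  also have "\<dots> = fact (Suc n + 2)" by (simp add: algebra_simps)
  finally show ?case .
qed simp

lemma exp_le_Bernstein:
  fixes s c :: real
  assumes sc: "\<bar>s\<bar> \<le> c" and c3: "c < 3"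
  shows "exp s \<le> 1 + s + s\<^sup>2 / (2 * (1 - c / 3))"
proof -
  have c0: "0 \<le> c" using sc by linarith
  have geo: "(\<lambda>n. s\<^sup>2 / 2 * (c / 3) ^ n) sums (s\<^sup>2 / 2 * (1 / (1 - c / 3)))"
    by (intro sums_mult geometric_sums) (use c0 c3 in auto)
  have "(\<Sum>n. inverse (fact (n + 2)) * s ^ (n + 2)) \<le> (\<Sum>n. s\<^sup>2 / 2 * (c / 3) ^ n)"
  proof (intro suminf_le allI)
    fix n
    have "s ^ (n + 2) \<le> \<bar>s\<bar> ^ (n + 2)" by (metis power_abs abs_ge_self)
    also have "\<dots> = s\<^sup>2 * \<bar>s\<bar> ^ n" by (metis power_add power2_abs mult.commute)
    also have "\<dots> \<le> s\<^sup>2 * c ^ n" by (intro mult_left_mono power_mono) (use sc in auto)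
    finally have "inverse (fact (n + 2)) * s ^ (n + 2) \<le> inverse (fact (n + 2)) * (s\<^sup>2 * c ^ n)"
      by (intro mult_left_mono) auto
    also have "\<dots> \<le> inverse ((2::real) * 3 ^ n) * (s\<^sup>2 * c ^ n)"
      by (intro mult_right_mono le_imp_inverse_le two_mult_three_power_le_fact) (use c0 in auto)
    also have "\<dots> = s\<^sup>2 / 2 * (c / 3) ^ n" by (simp add: power_divide field_simps)
    finally show "inverse (fact (n + 2)) * s ^ (n + 2) \<le> s\<^sup>2 / 2 * (c / 3) ^ n" .
  next
    show "summable (\<lambda>n. inverse (fact (n + 2)) * s ^ (n + 2))"
      using summable_exp[of s] by (subst summable_iff_shift[where k = 2]) simp
    show "summable (\<lambda>n. s\<^sup>2 / 2 * (c / 3) ^ n)" using geo by (rule sums_summable)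
  qed
  also have "\<dots> = s\<^sup>2 / (2 * (1 - c / 3))" using sums_unique[OF geo] by simp
  finally show ?thesis using exp_first_two_terms[of s] by simp
qed

lemma sum_mult_one_minus_le:
  fixes f :: "nat \<Rightarrow> real"
  assumes "1 \<le> T"
  shows "(\<Sum>t=1..T. f t * (1 - f t)) \<le> (\<Sum>t=1..T. f t) * (real T - (\<Sum>t=1..T. f t)) / real T"
proof -
  define H where "H = (\<Sum>t=1..T. f t)"
  define Q where "Q = (\<Sum>t=1..T. (f t)\<^sup>2)"
  define c where "c = H / real T"
  have T: "0 < real T" using assms by simp
  have "0 \<le> (\<Sum>t=1..T. (f t - c)\<^sup>2)" by (rule sum_nonneg) auto
  also have "\<dots> = (\<Sum>t=1..T. (f t)\<^sup>2 - (2 * c) * f t + c\<^sup>2)"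
    by (rule sum.cong) (auto simp: power2_eq_square algebra_simps)
  also have "\<dots> = Q - (2 * c) * H + real T * c\<^sup>2"
    by (simp add: sum.distrib sum_subtractf sum_distrib_left[symmetric] Q_def H_def)
  also have "\<dots> = Q - H\<^sup>2 / real T" using T by (simp add: c_def power2_eq_square field_simps)
  finally have "H\<^sup>2 / real T \<le> Q" by simp
  moreover have "(\<Sum>t=1..T. f t * (1 - f t)) = H - Q"
    by (simp add: H_def Q_def algebra_simps power2_eq_square sum_subtractf)
  moreover have "H - H\<^sup>2 / real T = H * (real T - H) / real T"
    using T by (simp add: power2_eq_square field_simps)
  ultimately show ?thesis unfolding H_def by linarith
qed

text \<open>The final algebra: \<open>R\<close> plays the regret, \<open>D\<close> the cumulative mixability gap, \<open>V\<close> the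
  cumulative variance, \<open>H\<close> the Hedge loss and \<open>a = ln K\<close>.\<close>

lemma regret_bound_of_quadratic_bound:
  fixes R D V H Ls a T :: real
  assumes T: "0 < T" and a: "0 \<le> a" and RD: "R \<le> 2 * D"
    and DD: "D\<^sup>2 \<le> a * V + (2 / 3 * a + 1) * D" and V: "V \<le> H * (T - H) / T"
    and H: "H = Ls + R" and L0: "0 \<le> Ls" and LT: "Ls \<le> T"
  shows "R \<le> 2 * sqrt (Ls * (T - Ls) / T * a) + 16 / 3 * a + 2"
proof (cases "R \<le> 0")
  case True
  have "0 \<le> Ls * (T - Ls) / T * a" using L0 LT T a by simp
  then have "0 \<le> sqrt (Ls * (T - Ls) / T * a)" by simp
  then show ?thesis using True a by linarith
next
  case False
  define A where "A = Ls * (T - Ls) / T"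
  define B where "B = 2 * a + (2 / 3 * a + 1)"
  define s where "s = sqrt (A * a)"
  have Aa: "0 \<le> A * a" unfolding A_def using L0 LT T a by simp
  have "H * (T - H) / T = A + R * (T - 2 * Ls - R) / T"
    unfolding H A_def using T by (simp add: field_simps)
  also have "R * (T - 2 * Ls - R) / T \<le> R"
    using False L0 T by (simp add: divide_le_eq algebra_simps)
  finally have "V \<le> A + 2 * D" using V RD by linarith
  then have "a * V \<le> a * (A + 2 * D)" by (rule mult_left_mono[OF _ a])
  then have DD2: "D * (D - B) \<le> s * s"
    using DD Aa unfolding B_def s_def by (simp add: power2_eq_square algebra_simps)
  have "D \<le> B + s"
  proof (rule ccontr)
    assume "\<not> D \<le> B + s"
    then have gt: "B + s < D" by simp
    have s0: "0 \<le> s" and B0: "0 \<le> B" using a Aa unfolding s_def B_def by auto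
    have "s * s \<le> D * s" using gt s0 B0 by (intro mult_right_mono) auto
    also have "\<dots> < D * (D - B)" using gt s0 B0 by (intro mult_strict_left_mono) auto
    finally show False using DD2 by simp
  qed
  then show ?thesis using RD unfolding B_def s_def A_def by (simp add: algebra_simps)
qed

context
  fixes w l :: "nat \<Rightarrow> real" and K :: nat
  assumes weights_nonneg: "\<And>k. k < K \<Longrightarrow> 0 \<le> w k"
    and sum_weights: "(\<Sum>k<K. w k) = 1"
    and losses_01: "\<And>k. k < K \<Longrightarrow> 0 \<le> l k \<and> l k \<le> 1"
begin

lemma weighted_mean_nonneg: "0 \<le> (\<Sum>k<K. w k * l k)"
  by (rule sum_nonneg) (use weights_nonneg losses_01 in auto)

lemma weighted_mean_le_one: "(\<Sum>k<K. w k * l k) \<le> 1"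
proof -
  have "(\<Sum>k<K. w k * l k) \<le> (\<Sum>k<K. w k)"
    by (rule sum_mono) (use weights_nonneg losses_01 in \<open>auto intro!: mult_right_le_one_le\<close>)
  then show ?thesis using sum_weights by simp
qed

lemma exp_weighted_mean_le: "exp (- x * (\<Sum>k<K. w k * l k)) \<le> (\<Sum>k<K. w k * exp (- x * l k))"
proof -
  define h where "h = (\<Sum>k<K. w k * l k)"
  define E where "E = exp (- x * h)"
  have "E = E * (\<Sum>k<K. w k) - (E * x) * h + (E * x * h) * (\<Sum>k<K. w k)"
    using sum_weights by simp
  also have "\<dots> = (\<Sum>k<K. E * w k - (E * x) * (w k * l k) + (E * x * h) * w k)"
    by (simp add: sum.distrib sum_subtractf sum_distrib_left h_def)
  also have "\<dots> = (\<Sum>k<K. w k * (E * (1 - x * (l k - h))))"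
    by (rule sum.cong) (auto simp: algebra_simps)
  finally have "exp (- x * h) = (\<Sum>k<K. w k * (exp (- x * h) * (1 - x * (l k - h))))"
    unfolding E_def .
  also have "\<dots> \<le> (\<Sum>k<K. w k * exp (- x * l k))"
  proof (rule sum_mono)
    fix k assume "k \<in> {..<K}"
    have "exp (- x * h) * (1 - x * (l k - h)) \<le> exp (- x * h) * exp (- x * (l k - h))"
      by (intro mult_left_mono) (auto simp: exp_ge_add_one_self[of "- x * (l k - h)", simplified])
    also have "\<dots> = exp (- x * l k)" by (simp add: exp_add[symmetric] algebra_simps)
    finally show "w k * (exp (- x * h) * (1 - x * (l k - h))) \<le> w k * exp (- x * l k)"
      using weights_nonneg \<open>k \<in> {..<K}\<close> by (intro mult_left_mono) auto
  qed
  finally show ?thesis by (simp add: h_def)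
qed

lemma weighted_mean_exp_le_one:
  assumes "0 \<le> x"
  shows "(\<Sum>k<K. w k * exp (- x * l k)) \<le> 1"
proof -
  have "(\<Sum>k<K. w k * exp (- x * l k)) \<le> (\<Sum>k<K. w k)"
    by (rule sum_mono) (use assms weights_nonneg losses_01 in \<open>auto intro!: mult_right_le_one_le\<close>)
  then show ?thesis using sum_weights by simp
qed

lemma weighted_mean_exp_pos: "0 < (\<Sum>k<K. w k * exp (- x * l k))"
  using exp_gt_zero exp_weighted_mean_le by (rule order.strict_trans2)

lemma weighted_variance_le:
  defines "h \<equiv> \<Sum>k<K. w k * l k"
  shows "(\<Sum>k<K. w k * (l k - h)\<^sup>2) \<le> h * (1 - h)"
proof -
  have "(\<Sum>k<K. w k * (l k - h)\<^sup>2) = (\<Sum>k<K. w k * (l k)\<^sup>2 - (2 * h) * (w k * l k) + h\<^sup>2 * w k)"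
    by (rule sum.cong) (auto simp: power2_eq_square algebra_simps)
  also have "\<dots> = (\<Sum>k<K. w k * (l k)\<^sup>2) - h\<^sup>2"
    by (simp add: sum.distrib sum_subtractf sum_distrib_left[symmetric] h_def[symmetric]
        sum_weights power2_eq_square)
  also have "(\<Sum>k<K. w k * (l k)\<^sup>2) \<le> h"
    unfolding h_def
  proof (rule sum_mono)
    fix k assume "k \<in> {..<K}"
    then have "(l k)\<^sup>2 \<le> l k"
      using losses_01[of k] by (auto simp: power2_eq_square intro: mult_left_le_one_le)
    then show "w k * (l k)\<^sup>2 \<le> w k * l k"
      using weights_nonneg \<open>k \<in> {..<K}\<close> by (intro mult_left_mono) auto
  qed
  finally show ?thesis by (simp add: power2_eq_square algebra_simps)
qed

lemma ln_weighted_mean_exp_le: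
  assumes x: "0 < x" "x < 3"
  defines "h \<equiv> \<Sum>k<K. w k * l k"
  shows "ln (\<Sum>k<K. w k * exp (- x * l k))
    \<le> - x * h + x\<^sup>2 * (\<Sum>k<K. w k * (l k - h)\<^sup>2) / (2 * (1 - x / 3))"
proof -
  define g where "g = x\<^sup>2 / (2 * (1 - x / 3))"
  define v where "v = (\<Sum>k<K. w k * (l k - h)\<^sup>2)"
  have "0 \<le> v" unfolding v_def by (rule sum_nonneg) (use weights_nonneg in auto)
  moreover have "0 \<le> g" using x unfolding g_def by simp
  ultimately have q0: "0 \<le> g * v" by simp
  have Z0: "0 < (\<Sum>k<K. w k * exp (- x * l k))" by (rule weighted_mean_exp_pos)
  have "(\<Sum>k<K. w k * exp (- x * l k)) = exp (- x * h) * (\<Sum>k<K. w k * exp (x * (h - l k)))"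
    by (simp add: sum_distrib_left exp_add[symmetric] algebra_simps)
  also have "\<dots> \<le> exp (- x * h) * (\<Sum>k<K. w k * (1 + x * (h - l k) + g * (l k - h)\<^sup>2))"
  proof (rule mult_left_mono[OF sum_mono])
    fix k assume k: "k \<in> {..<K}"
    have "\<bar>x * (h - l k)\<bar> \<le> x"
      using losses_01[of k] k weighted_mean_nonneg weighted_mean_le_one x
      by (auto simp: abs_mult abs_le_iff h_def)
    then have "exp (x * (h - l k)) \<le> 1 + x * (h - l k) + (x * (h - l k))\<^sup>2 / (2 * (1 - x / 3))"
      by (rule exp_le_Bernstein) (use x in auto)
    also have "(x * (h - l k))\<^sup>2 / (2 * (1 - x / 3)) = g * (l k - h)\<^sup>2"
      by (simp add: g_def power_mult_distrib power2_commute)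
    finally show "w k * exp (x * (h - l k)) \<le> w k * (1 + x * (h - l k) + g * (l k - h)\<^sup>2)"
      using weights_nonneg k by (intro mult_left_mono) auto
  qed simp
  also have "(\<Sum>k<K. w k * (1 + x * (h - l k) + g * (l k - h)\<^sup>2)) = 1 + g * v"
  proof -
    have "(\<Sum>k<K. w k * h) = h" using sum_weights by (simp add: sum_distrib_right[symmetric])
    then show ?thesis using sum_weights
      by (simp add: algebra_simps sum.distrib sum_subtractf sum_distrib_left[symmetric] h_def v_def)
  qed
  finally have "ln (\<Sum>k<K. w k * exp (- x * l k)) \<le> ln (exp (- x * h) * (1 + g * v))"
    using Z0 q0 by (subst ln_le_cancel_iff) auto
  also have "\<dots> \<le> - x * h + g * v"
    using q0 ln_add_one_self_le_self[of "g * v"] by (simp add: ln_mult)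
  finally show ?thesis by (simp add: g_def v_def)
qed

lemma mixability_gap_bounds:
  assumes x: "0 < x"
  defines "h \<equiv> \<Sum>k<K. w k * l k"
    and "d \<equiv> (\<Sum>k<K. w k * l k) + ln (\<Sum>k<K. w k * exp (- x * l k)) / x"
  shows "0 \<le> d" and "d \<le> 1" and "2 * d / x \<le> (\<Sum>k<K. w k * (l k - h)\<^sup>2) + 2 / 3 * d"
proof -
  define Z where "Z = (\<Sum>k<K. w k * exp (- x * l k))"
  define v where "v = (\<Sum>k<K. w k * (l k - h)\<^sup>2)"
  have Z0: "0 < Z" unfolding Z_def by (rule weighted_mean_exp_pos)
  have "ln (exp (- x * h)) \<le> ln Z"
    using exp_weighted_mean_le[of x] Z0 unfolding Z_def h_def by (subst ln_le_cancel_iff) auto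
  then have "- h \<le> ln Z / x" using x by (simp add: field_simps)
  then show d0: "0 \<le> d" unfolding d_def h_def Z_def by simp
  have "ln Z \<le> 0" using weighted_mean_exp_le_one[of x] Z0 x unfolding Z_def by simp
  then have "ln Z / x \<le> 0" using x by (simp add: divide_nonpos_pos)
  then show "d \<le> 1" using weighted_mean_le_one unfolding d_def Z_def by simp
  have v0: "0 \<le> v" unfolding v_def by (rule sum_nonneg) (use weights_nonneg in auto)
  show "2 * d / x \<le> (\<Sum>k<K. w k * (l k - h)\<^sup>2) + 2 / 3 * d"
  proof (cases "x < 3")
    case False
    then have "2 * d / x \<le> 2 * d / 3" using d0 x by (intro divide_left_mono) auto
    then show ?thesis using v0 unfolding v_def by simp
  next
    case True
    define q where "q = x\<^sup>2 * v / (2 * (1 - x / 3))"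
    have "ln Z \<le> - x * h + q"
      using ln_weighted_mean_exp_le[OF x True] unfolding Z_def q_def v_def h_def .
    then have "ln Z / x \<le> - h + q / x" using x by (simp add: field_simps)
    then have dq: "d \<le> q / x" unfolding d_def h_def Z_def by simp
    have "2 * d / x - 2 / 3 * d = d * (2 / x - 2 / 3)" by (simp add: algebra_simps)
    also have "\<dots> \<le> q / x * (2 / x - 2 / 3)"
      using dq True x by (intro mult_right_mono) (auto simp: field_simps)
    also have "\<dots> = v"
    proof -
      have "1 - x / 3 = (3 - x) / 3" and "2 / x - 2 / 3 = 2 * (3 - x) / (3 * x)"
        using x by (auto simp: field_simps)
      then show ?thesis unfolding q_def using x True by (simp add: power2_eq_square)
    qed
    finally show ?thesis unfolding v_def by simp
  qed
qed

end

lemma cumL_0 [simp]: "cumL l 0 k = 0"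
  by (simp add: cumL_def)

lemma cumL_Suc: "cumL l (Suc t) k = cumL l t k + l (Suc t) k"
  by (simp add: cumL_def)

lemma Lstar_le: "k < K \<Longrightarrow> Lstar l K t \<le> cumL l t k"
  unfolding Lstar_def by (rule Min_le) auto

lemma Lstar_attained:
  assumes "1 \<le> K"
  obtains k where "k < K" and "Lstar l K t = cumL l t k"
proof -
  have "Lstar l K t \<in> (\<lambda>k. cumL l t k) ` {..<K}"
    unfolding Lstar_def using assms by (intro Min_in) (auto simp: lessThan_empty_iff)
  then show ?thesis using that by auto
qed

lemma Lstar_0:
  assumes "1 \<le> K"
  shows "Lstar l K 0 = 0"
proof -
  obtain k where "Lstar l K 0 = cumL l 0 k" using Lstar_attained[OF assms] .
  then show ?thesis by simp
qed

lemma Lstar_nonneg_le: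
  assumes K: "1 \<le> K" and l: "\<And>t k. t \<in> {1..T} \<Longrightarrow> k < K \<Longrightarrow> 0 \<le> l t k \<and> l t k \<le> 1"
  shows "0 \<le> Lstar l K T" and "Lstar l K T \<le> real T"
proof -
  obtain j where j: "j < K" "Lstar l K T = cumL l T j" using Lstar_attained[OF K] .
  show "0 \<le> Lstar l K T"
    unfolding j cumL_def by (rule sum_nonneg) (use l j in auto)
  have "cumL l T j \<le> (\<Sum>s=1..T. 1)" unfolding cumL_def by (rule sum_mono) (use l j in auto)
  then show "Lstar l K T \<le> real T" using j by simp
qed

lemma exp_weights_nonneg: "0 \<le> exp_weights l K eta t k"
  unfolding exp_weights_def Let_def by (auto intro!: divide_nonneg_nonneg sum_nonneg)

lemma sum_exp_weights:
  assumes "1 \<le> K"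
  shows "(\<Sum>k<K. exp_weights l K eta t k) = 1"
proof (cases "eta = \<infinity>")
  case True
  define S where "S = {j \<in> {..<K}. cumL l (t - 1) j = Lstar l K (t - 1)}"
  obtain j where "j < K" "Lstar l K (t - 1) = cumL l (t - 1) j"
    using Lstar_attained[OF assms] .
  then have S: "finite S" "S \<noteq> {}" "S \<subseteq> {..<K}" unfolding S_def by auto
  have "(\<Sum>k<K. exp_weights l K eta t k) = (\<Sum>k<K. if k \<in> S then 1 / real (card S) else 0)"
    using True unfolding exp_weights_def Let_def S_def[symmetric] by simp
  also have "\<dots> = (\<Sum>k\<in>S. 1 / real (card S))" using S by (simp add: sum.If_cases Int_absorb1)
  also have "\<dots> = 1" using S by simp
  finally show ?thesis .
next
  case False
  have "0 < (\<Sum>j<K. exp (- real_of_ereal eta * cumL l (t - 1) j))"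
    using assms by (intro sum_pos) (auto simp: lessThan_empty_iff)
  then show ?thesis using False by (simp add: exp_weights_def sum_divide_distrib[symmetric])
qed

definition hedge_var :: "(nat \<Rightarrow> nat \<Rightarrow> real) \<Rightarrow> nat \<Rightarrow> ereal \<Rightarrow> nat \<Rightarrow> real" where
  "hedge_var l K eta t =
     (\<Sum>k<K. exp_weights l K eta t k * (l t k - hedge_loss l K eta t)\<^sup>2)"

context
  fixes l :: "nat \<Rightarrow> nat \<Rightarrow> real" and K t :: nat
  assumes K: "1 \<le> K" and losses_01: "\<And>k. k < K \<Longrightarrow> 0 \<le> l t k \<and> l t k \<le> 1"
begin

lemma hedge_loss_le_one: "hedge_loss l K eta t \<le> 1"
  unfolding hedge_loss_def
  by (rule weighted_mean_le_one[where w = "exp_weights l K eta t" and l = "l t", OF exp_weights_nonneg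
        sum_exp_weights[OF K] losses_01])

lemma hedge_var_nonneg: "0 \<le> hedge_var l K eta t"
  unfolding hedge_var_def by (rule sum_nonneg) (use exp_weights_nonneg in auto)

lemma hedge_var_le: "hedge_var l K eta t \<le> hedge_loss l K eta t * (1 - hedge_loss l K eta t)"
  unfolding hedge_var_def hedge_loss_def
  by (rule weighted_variance_le[where w = "exp_weights l K eta t" and l = "l t", OF exp_weights_nonneg
        sum_exp_weights[OF K] losses_01])

end

definition hedge_potential :: "(nat \<Rightarrow> nat \<Rightarrow> real) \<Rightarrow> nat \<Rightarrow> ereal \<Rightarrow> nat \<Rightarrow> real" where
  "hedge_potential l K eta t =
     (if eta = \<infinity> then Lstar l K t
      else (ln (real K) - ln (\<Sum>k<K. exp (- real_of_ereal eta * cumL l t k))) / real_of_ereal eta)"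

lemma hedge_potential_0: "1 \<le> K \<Longrightarrow> hedge_potential l K eta 0 = 0"
  by (simp add: hedge_potential_def Lstar_0)

lemma mix_loss_eq_potential_diff:
  assumes K: "1 \<le> K" and t: "1 \<le> t" and eta: "0 < eta"
  shows "mix_loss l K eta t = hedge_potential l K eta t - hedge_potential l K eta (t - 1)"
proof (cases eta)
  case (real x)
  then have x: "0 < x" using eta by simp
  obtain s where ts: "t = Suc s" using t by (cases t) auto
  define D where "D = (\<Sum>j<K. exp (- x * cumL l s j))"
  define N where "N = (\<Sum>j<K. exp (- x * cumL l t j))"
  have D: "0 < D" unfolding D_def using K by (intro sum_pos) (auto simp: lessThan_empty_iff)
  have N: "0 < N" unfolding N_def using K by (intro sum_pos) (auto simp: lessThan_empty_iff)
  have "(\<Sum>k<K. exp_weights l K eta t k * exp (- x * l t k)) = (\<Sum>k<K. exp (- x * cumL l t k) / D)"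
    by (rule sum.cong)
      (auto simp: real exp_weights_def D_def ts cumL_Suc exp_add[symmetric] algebra_simps)
  also have "\<dots> = N / D" by (simp add: N_def sum_divide_distrib)
  finally have "(\<Sum>k<K. exp_weights l K eta t k * exp (- x * l t k)) = N / D" .
  then have "mix_loss l K eta t = - (1 / x) * ln (N / D)" by (simp add: mix_loss_def real)
  also have "\<dots> = (ln (real K) - ln N) / x - (ln (real K) - ln D) / x"
    using D N x by (simp add: ln_div field_simps)
  finally show ?thesis unfolding hedge_potential_def using real by (simp add: N_def D_def ts)
qed (use eta in \<open>auto simp: mix_loss_def hedge_potential_def\<close>)

context
  fixes l :: "nat \<Rightarrow> nat \<Rightarrow> real" and K t :: nat and x :: real
  assumes K: "1 \<le> K" and x: "0 < x"
begin

lemma Lstar_le_potential: "Lstar l K t \<le> hedge_potential l K (ereal x) t"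
proof -
  define B where "B = (\<Sum>k<K. exp (- x * cumL l t k))"
  have "B \<le> (\<Sum>k<K. exp (- x * Lstar l K t))"
    unfolding B_def using x by (intro sum_mono) (auto intro: Lstar_le)
  then have "B \<le> real K * exp (- x * Lstar l K t)" by simp
  moreover have "0 < B" unfolding B_def using K by (intro sum_pos) (auto simp: lessThan_empty_iff)
  ultimately have "ln B \<le> ln (real K * exp (- x * Lstar l K t))" by (subst ln_le_cancel_iff) auto
  also have "\<dots> = ln (real K) - x * Lstar l K t" using K by (simp add: ln_mult)
  finally show ?thesis unfolding hedge_potential_def B_def using x by (simp add: field_simps)
qed

lemma potential_le_Lstar: "hedge_potential l K (ereal x) t \<le> Lstar l K t + ln (real K) / x"
proof -
  define B where "B = (\<Sum>k<K. exp (- x * cumL l t k))"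
  obtain j where j: "j < K" "Lstar l K t = cumL l t j" using Lstar_attained[OF K] .
  have "exp (- x * cumL l t j) \<le> B" unfolding B_def by (rule member_le_sum) (use j in auto)
  moreover have "0 < B" unfolding B_def using K by (intro sum_pos) (auto simp: lessThan_empty_iff)
  ultimately have "ln (exp (- x * cumL l t j)) \<le> ln B" by (subst ln_le_cancel_iff) auto
  then have "- ln B / x \<le> Lstar l K t" using j x by (simp add: field_simps)
  then show ?thesis unfolding hedge_potential_def B_def by (simp add: diff_divide_distrib)
qed

text \<open>Jensen's inequality for the convex map z \<mapsto> z powr (y / x), applied to the average of the
  weights exp (- x L_t,k).\<close>

lemma potential_antimono_real:
  assumes xy: "x \<le> y"
  shows "hedge_potential l K (ereal y) t \<le> hedge_potential l K (ereal x) t"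
proof -
  define p where "p = y / x"
  define A where "A = (\<Sum>k<K. exp (- x * cumL l t k))"
  define B where "B = (\<Sum>k<K. exp (- y * cumL l t k))"
  have p: "1 \<le> p" and xp: "x * p = y" using x xy by (auto simp: p_def)
  have A: "0 < A" and B: "0 < B" and K': "0 < real K"
    unfolding A_def B_def using K by (auto intro!: sum_pos simp: lessThan_empty_iff)
  have powr: "exp (- (x * cumL l t k)) powr p = exp (- (y * cumL l t k))" for k
    by (simp add: powr_def xp[symmetric] algebra_simps)
  have "(\<lambda>z. z powr p) (\<Sum>k<K. (1 / real K) *\<^sub>R exp (- x * cumL l t k))
      \<le> (\<Sum>k<K. (1 / real K) * (\<lambda>z. z powr p) (exp (- x * cumL l t k)))"
    by (rule convex_on_sum[OF _ _ powr_convex[OF p]]) (use K in \<open>auto simp: lessThan_empty_iff\<close>)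
  then have "(A / real K) powr p \<le> B / real K"
    by (simp add: powr A_def B_def sum_divide_distrib[symmetric] sum_distrib_left[symmetric])
  then have "ln ((A / real K) powr p) \<le> ln (B / real K)"
    using A B K' by (subst ln_le_cancel_iff) auto
  then have "p * (ln A - ln (real K)) \<le> ln B - ln (real K)"
    using A B K' by (simp add: ln_powr ln_div)
  then have "y * (ln A - ln (real K)) \<le> x * (ln B - ln (real K))"
    using x xp mult_left_mono[of _ _ x] by (fastforce simp: mult.assoc[symmetric])
  then have "(ln (real K) - ln B) / y \<le> (ln (real K) - ln A) / x"
    using x xy by (simp add: field_simps)
  then show ?thesis unfolding hedge_potential_def A_def B_def by simp
qed

end

lemma potential_antimono:
  assumes K: "1 \<le> K" and "0 < eta'" and "eta' \<le> eta"
  shows "hedge_potential l K eta t \<le> hedge_potential l K eta' t"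
  using assms
proof (cases eta'; cases eta)
  fix x assume "eta' = ereal x" "eta = \<infinity>"
  then show ?thesis
    using assms Lstar_le_potential[OF K, of x l t] by (simp add: hedge_potential_def)
qed (auto simp: potential_antimono_real)

lemma mix_gap_single_expert: "1 \<le> t \<Longrightarrow> mix_gap l 1 \<infinity> t = 0"
proof -
  assume "1 \<le> t"
  then obtain s where ts: "t = Suc s" by (cases t) auto
  have L: "Lstar l (Suc 0) u = cumL l u 0" for u by (simp add: Lstar_def lessThan_Suc)
  have "{j. j = 0 \<and> cumL l s j = cumL l s 0} = {0::nat}" by auto
  then have "exp_weights l (Suc 0) \<infinity> t 0 = 1" by (simp add: exp_weights_def L lessThan_Suc ts)
  then show ?thesis by (simp add: mix_gap_def hedge_loss_def mix_loss_def L ts cumL_Suc)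
qed

context
  fixes l :: "nat \<Rightarrow> nat \<Rightarrow> real" and K t :: nat
  assumes K: "1 \<le> K" and losses_01: "\<And>k. k < K \<Longrightarrow> 0 \<le> l t k \<and> l t k \<le> 1"
begin

lemma mix_gap_real_bounds:
  assumes "0 < x"
  shows "0 \<le> mix_gap l K (ereal x) t" and "mix_gap l K (ereal x) t \<le> 1"
    and "2 * mix_gap l K (ereal x) t / x
      \<le> hedge_var l K (ereal x) t + 2 / 3 * mix_gap l K (ereal x) t"
  using mixability_gap_bounds[where w = "exp_weights l K (ereal x) t" and l = "l t",
      OF exp_weights_nonneg sum_exp_weights[OF K] losses_01 assms]
  by (simp_all add: mix_gap_def hedge_loss_def mix_loss_def hedge_var_def)

text \<open>With eta = \<infinity> the weights sit on the current leaders, each of which suffers at least the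
  increase of L* in round t.\<close>

lemma mix_gap_infinite_bounds:
  assumes "1 \<le> t"
  shows "0 \<le> mix_gap l K \<infinity> t" and "mix_gap l K \<infinity> t \<le> 1"
proof -
  obtain s where ts: "t = Suc s" using assms by (cases t) auto
  define w where "w = exp_weights l K \<infinity> t"
  define m where "m = Lstar l K t - Lstar l K s"
  have gap: "mix_gap l K \<infinity> t = hedge_loss l K \<infinity> t - m"
    by (simp add: mix_gap_def mix_loss_def m_def ts)
  have "(\<Sum>k<K. w k * m) \<le> (\<Sum>k<K. w k * l t k)"
  proof (rule sum_mono)
    fix k assume k: "k \<in> {..<K}"
    show "w k * m \<le> w k * l t k"
    proof (cases "cumL l s k = Lstar l K s")
      case True
      have "Lstar l K t \<le> cumL l t k" using k by (intro Lstar_le) auto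
      then have "m \<le> l t k" using True by (simp add: m_def ts cumL_Suc)
      then show ?thesis using exp_weights_nonneg by (intro mult_left_mono) (auto simp: w_def)
    qed (simp add: w_def exp_weights_def ts)
  qed
  then have "m \<le> hedge_loss l K \<infinity> t"
    using sum_exp_weights[OF K] by (simp add: hedge_loss_def w_def sum_distrib_right[symmetric])
  then show "0 \<le> mix_gap l K \<infinity> t" using gap by simp
  obtain j where j: "j < K" "Lstar l K t = cumL l t j" using Lstar_attained[OF K] .
  have "Lstar l K s \<le> cumL l s j" using j by (intro Lstar_le)
  then have "0 \<le> m" using j losses_01[of j] by (simp add: m_def ts cumL_Suc)
  moreover have "hedge_loss l K \<infinity> t \<le> 1" by (rule hedge_loss_le_one) (use K losses_01 in auto)
  ultimately show "mix_gap l K \<infinity> t \<le> 1" using gap by simp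
qed

lemma mix_gap_bounds:
  assumes "1 \<le> t" and "0 < eta"
  shows "0 \<le> mix_gap l K eta t" and "mix_gap l K eta t \<le> 1"
  using assms mix_gap_infinite_bounds mix_gap_real_bounds(1,2) by (cases eta; simp)+

end

lemma ah_Delta_eq_sum: "ah_Delta l K n = (\<Sum>t=1..n. mix_gap l K (ah_eta l K t) t)"
  by (induction n) (simp_all add: ah_eta_def)

text \<open>The rate ln K / Delta is positive only when K \<ge> 2; with a single expert AdaHedge keeps the
  rate \<infinity>, because then Delta stays 0.\<close>

lemma ah_rate_pos:
  assumes "1 \<le> K" and "0 \<le> D" and "K = 1 \<longrightarrow> D = 0"
  shows "0 < ah_rate K D"
proof (cases "D = 0")
  case False
  then have "2 \<le> K" and "0 < D" using assms by auto
  then show ?thesis using False by (simp add: ah_rate_def)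
qed (simp add: ah_rate_def)

context
  fixes l :: "nat \<Rightarrow> nat \<Rightarrow> real" and K T :: nat
  assumes K: "1 \<le> K" and losses_01: "\<And>t k. t \<in> {1..T} \<Longrightarrow> k < K \<Longrightarrow> 0 \<le> l t k \<and> l t k \<le> 1"
begin

lemma ah_Delta_invariant:
  "n \<le> T \<Longrightarrow> 0 \<le> ah_Delta l K n \<and> (K = 1 \<longrightarrow> ah_Delta l K n = 0)"
proof (induction n)
  case (Suc n)
  then have IH: "0 \<le> ah_Delta l K n" "K = 1 \<longrightarrow> ah_Delta l K n = 0" by auto
  have "0 \<le> mix_gap l K (ah_rate K (ah_Delta l K n)) (Suc n)"
    using Suc.prems losses_01 by (intro mix_gap_bounds K ah_rate_pos IH) auto
  moreover have "K = 1 \<longrightarrow> ah_Delta l K (Suc n) = 0"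
    using IH mix_gap_single_expert[of "Suc n" l] by (auto simp: ah_rate_def)
  ultimately show ?case using IH by simp
qed simp

lemma ah_rate_Delta_pos: "n \<le> T \<Longrightarrow> 0 < ah_rate K (ah_Delta l K n)"
  using ah_Delta_invariant by (blast intro: ah_rate_pos K)

context
  fixes n :: nat
  assumes n: "Suc n \<le> T"
begin

lemma ah_mix_gap_bounds:
  shows "0 \<le> mix_gap l K (ah_rate K (ah_Delta l K n)) (Suc n)"
    and "mix_gap l K (ah_rate K (ah_Delta l K n)) (Suc n) \<le> 1"
  using n losses_01 by (auto intro!: mix_gap_bounds K ah_rate_Delta_pos)

lemma ah_mix_gap_Bernstein:
  "2 * mix_gap l K (ah_rate K (ah_Delta l K n)) (Suc n) * ah_Delta l K n
    \<le> ln (real K) * hedge_var l K (ah_rate K (ah_Delta l K n)) (Suc n)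
      + 2 / 3 * ln (real K) * mix_gap l K (ah_rate K (ah_Delta l K n)) (Suc n)"
proof -
  define D where "D = ah_Delta l K n"
  define g where "g = mix_gap l K (ah_rate K D) (Suc n)"
  have l01: "\<And>k. k < K \<Longrightarrow> 0 \<le> l (Suc n) k \<and> l (Suc n) k \<le> 1" using losses_01 n by auto
  have lnK: "0 \<le> ln (real K)" using K by simp
  have "2 * g * D \<le> ln (real K) * hedge_var l K (ah_rate K D) (Suc n) + 2 / 3 * ln (real K) * g"
  proof (cases "D = 0")
    case True
    then show ?thesis
      using ah_mix_gap_bounds hedge_var_nonneg[where l = l and t = "Suc n", OF K l01] lnK
      by (simp add: g_def D_def)
  next
    case False
    have "0 \<le> D" "K = 1 \<longrightarrow> D = 0" using ah_Delta_invariant n unfolding D_def by auto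
    then have D: "0 < D" and "0 < ln (real K)" using False K by auto
    define x where "x = ln (real K) / D"
    have x: "0 < x" and Dx: "D = ln (real K) / x" and rate: "ah_rate K D = ereal x"
      using D \<open>0 < ln (real K)\<close> False by (auto simp: x_def ah_rate_def)
    have "2 * g * D = ln (real K) * (2 * g / x)" by (simp add: Dx)
    also have "\<dots> \<le> ln (real K) * (hedge_var l K (ah_rate K D) (Suc n) + 2 / 3 * g)"
      using mix_gap_real_bounds(3)[where l = l and t = "Suc n", OF K l01 x] lnK
      unfolding g_def rate by (intro mult_left_mono) auto
    finally show ?thesis by (simp add: algebra_simps)
  qed
  then show ?thesis unfolding g_def D_def .
qed

lemma ah_rate_antimono: "ah_rate K (ah_Delta l K (Suc n)) \<le> ah_rate K (ah_Delta l K n)"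
proof (cases "ah_Delta l K n = 0")
  case False
  have "0 \<le> ah_Delta l K n" using ah_Delta_invariant n by simp
  then have D: "0 < ah_Delta l K n" using False by simp
  have "ah_Delta l K n \<le> ah_Delta l K (Suc n)" using ah_mix_gap_bounds(1) by simp
  moreover have "0 \<le> ln (real K)" using K by simp
  ultimately have "ln (real K) / ah_Delta l K (Suc n) \<le> ln (real K) / ah_Delta l K n"
    using D by (intro divide_left_mono) auto
  then show ?thesis using D \<open>ah_Delta l K n \<le> ah_Delta l K (Suc n)\<close> by (simp add: ah_rate_def)
qed (simp add: ah_rate_def)

end

lemma sum_mix_loss_le_potential:
  "n \<le> T \<Longrightarrow> (\<Sum>t=1..n. mix_loss l K (ah_eta l K t) t)
    \<le> hedge_potential l K (ah_rate K (ah_Delta l K n)) n"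
proof (induction n)
  case (Suc n)
  define eta where "eta = ah_rate K (ah_Delta l K n)"
  have eta: "0 < eta" unfolding eta_def using Suc.prems by (intro ah_rate_Delta_pos) simp
  have "(\<Sum>t=1..Suc n. mix_loss l K (ah_eta l K t) t)
      = (\<Sum>t=1..n. mix_loss l K (ah_eta l K t) t) + mix_loss l K eta (Suc n)"
    by (simp add: ah_eta_def eta_def)
  also have "\<dots> \<le> hedge_potential l K eta n
      + (hedge_potential l K eta (Suc n) - hedge_potential l K eta n)"
    using Suc mix_loss_eq_potential_diff[OF K _ eta, of "Suc n" l] by (simp add: eta_def)
  also have "\<dots> \<le> hedge_potential l K (ah_rate K (ah_Delta l K (Suc n))) (Suc n)"
    using potential_antimono[OF K ah_rate_Delta_pos[OF Suc.prems] ah_rate_antimono[OF Suc.prems]]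
    by (simp add: eta_def)
  finally show ?case .
qed (simp add: hedge_potential_0[OF K])

lemma ah_regret_le_twice_Delta: "ah_regret l K T \<le> 2 * ah_Delta l K T"
proof -
  have "(\<Sum>t=1..T. hedge_loss l K (ah_eta l K t) t)
      = (\<Sum>t=1..T. mix_loss l K (ah_eta l K t) t) + ah_Delta l K T"
    by (simp add: ah_Delta_eq_sum mix_gap_def sum.distrib[symmetric])
  moreover have "(\<Sum>t=1..T. mix_loss l K (ah_eta l K t) t) \<le> Lstar l K T + ah_Delta l K T"
  proof (cases "ah_Delta l K T = 0")
    case False
    have "0 \<le> ah_Delta l K T" and "K = 1 \<longrightarrow> ah_Delta l K T = 0"
      using ah_Delta_invariant by auto
    then have D: "0 < ah_Delta l K T" and "K \<noteq> 1" using False by auto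
    then have "0 < ln (real K)" using K by simp
    then have x: "0 < ln (real K) / ah_Delta l K T" using D by simp
    show ?thesis
      using sum_mix_loss_le_potential[of T] potential_le_Lstar[OF K x, of l T] D \<open>0 < ln (real K)\<close>
      by (simp add: ah_rate_def False)
  qed (use sum_mix_loss_le_potential[of T] in \<open>simp add: ah_rate_def hedge_potential_def\<close>)
  ultimately show ?thesis unfolding ah_regret_def by simp
qed

lemma ah_Delta_square_le:
  "n \<le> T \<Longrightarrow> (ah_Delta l K n)\<^sup>2
    \<le> ln (real K) * (\<Sum>t=1..n. hedge_var l K (ah_eta l K t) t)
      + (2 / 3 * ln (real K) + 1) * ah_Delta l K n"
proof (induction n)
  case (Suc n)
  define D where "D = ah_Delta l K n"
  define g where "g = mix_gap l K (ah_rate K D) (Suc n)"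
  define v where "v = hedge_var l K (ah_rate K D) (Suc n)"
  have g: "0 \<le> g" "g \<le> 1" "2 * g * D \<le> ln (real K) * v + 2 / 3 * ln (real K) * g"
    using ah_mix_gap_bounds[OF Suc.prems] ah_mix_gap_Bernstein[OF Suc.prems]
    unfolding g_def v_def D_def by auto
  then have "g\<^sup>2 \<le> g" by (simp add: power2_eq_square mult_left_le_one_le)
  have "(ah_Delta l K (Suc n))\<^sup>2 = D\<^sup>2 + 2 * g * D + g\<^sup>2"
    by (simp add: g_def D_def power2_eq_square algebra_simps)
  also have "\<dots> \<le> (ln (real K) * (\<Sum>t=1..n. hedge_var l K (ah_eta l K t) t)
      + (2 / 3 * ln (real K) + 1) * D) + (ln (real K) * v + 2 / 3 * ln (real K) * g) + g"
    using Suc g \<open>g\<^sup>2 \<le> g\<close> unfolding D_def by simp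
  also have "\<dots> = ln (real K) * (\<Sum>t=1..Suc n. hedge_var l K (ah_eta l K t) t)
      + (2 / 3 * ln (real K) + 1) * ah_Delta l K (Suc n)"
    by (simp add: g_def v_def D_def ah_eta_def algebra_simps)
  finally show ?case .
qed simp

end

theorem theorem8:
  fixes lossv :: "nat \<Rightarrow> nat \<Rightarrow> real" and K T :: nat
  assumes "K \<ge> 1" and "T \<ge> 1"
    and "\<And>t k. t \<in> {1..T} \<Longrightarrow> k < K \<Longrightarrow> 0 \<le> lossv t k \<and> lossv t k \<le> 1"
  shows "ah_regret lossv K T
    \<le> 2 * sqrt (Lstar lossv K T * (real T - Lstar lossv K T) / real T * ln (real K))
      + 16 / 3 * ln (real K) + 2"
proof (rule regret_bound_of_quadratic_bound)
  let ?h = "\<lambda>t. hedge_loss lossv K (ah_eta lossv K t) t"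
  have "(\<Sum>t=1..T. hedge_var lossv K (ah_eta lossv K t) t) \<le> (\<Sum>t=1..T. ?h t * (1 - ?h t))"
    using assms(3) by (intro sum_mono hedge_var_le[OF assms(1)]) auto
  also have "\<dots> \<le> (\<Sum>t=1..T. ?h t) * (real T - (\<Sum>t=1..T. ?h t)) / real T"
    using assms(2) by (rule sum_mult_one_minus_le)
  finally show "(\<Sum>t=1..T. hedge_var lossv K (ah_eta lossv K t) t)
    \<le> (\<Sum>t=1..T. ?h t) * (real T - (\<Sum>t=1..T. ?h t)) / real T" .
  show "(\<Sum>t=1..T. ?h t) = Lstar lossv K T + ah_regret lossv K T"
    by (simp add: ah_regret_def)
  show "ah_regret lossv K T \<le> 2 * ah_Delta lossv K T"
    using ah_regret_le_twice_Delta[OF assms(1,3)] .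
  show "(ah_Delta lossv K T)\<^sup>2 \<le> ln (real K) * (\<Sum>t=1..T. hedge_var lossv K (ah_eta lossv K t) t)
      + (2 / 3 * ln (real K) + 1) * ah_Delta lossv K T"
    using ah_Delta_square_le[OF assms(1,3)] by simp
  show "0 \<le> Lstar lossv K T" "Lstar lossv K T \<le> real T"
    using Lstar_nonneg_le[OF assms(1,3)] by auto
qed (use assms in auto)

end
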